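(* Let $q$ be odd, $\varepsilon=\left(\frac{-1}{q}\right)$, $\nu=\left(\frac2q\right)$, $m=(q-\varepsilon)/4$. In ${\mathbb F}_q[x]$: (i) $T_m(x)=2^{m-1}\prod\{x-b: b\in\mathcal B_1^{-\nu,-\nu}\}$ and $U_{m-1}(x)=2^{m-1}\prod\{x-b:b\in\mathcal B_1^{\nu,\nu}\}$. (ii) $U_{(q-3)/2}(x)=2^{(q-3)/2}\prod\{x-b: b\in{\mathbb F}_q,\ \left(\frac{b^2-1}{q}\right)=1\}$ and $U_{(q-1)/2}(x)=2^{(q-1)/2}\prod\{x-b: b\in{\mathbb F}_q,\ \left(\frac{b^2-1}{q}\right)=-1\}$.
   Context: Chebyshev polynomials $T_k,U_k\in\mathbb Z[x]$: $T_0=1$, $T_1=x$, $T_{k+2}=2xT_{k+1}-T_k$; $U_0=1$, $U_1=2x$, $U_{k+2}=2xU_{k+1}-U_k$. $\left(\frac{a}{q}\right)$ is the Legendre symbol on ${\mathbb F}_q$. For $\lambda\in{\mathbb F}_q^\times$, $\varepsilon_1,\varepsilon_2\in\{\pm1\}$, $\mathcal B_\lambda^{\varepsilon_1,\varepsilon_2}=\{b\in{\mathbb F}_q:\left(\frac{\lambda-b}{q}\right)=\varepsilon_1,\ \left(\frac{\lambda+b}{q}\right)=\varepsilon_2\}$. Empty products equal $1$. *)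

theory Defs
  imports "HOL-Computational_Algebra.Polynomial"
begin

text \<open>Chebyshev polynomials, defined by their integer recurrences directly over an
arbitrary commutative ring (this is the image of the integer polynomials).\<close>
fun cheb_T :: "nat \<Rightarrow> 'a::comm_ring_1 poly" where
  "cheb_T 0 = 1"
| "cheb_T (Suc 0) = [:0, 1:]"
| "cheb_T (Suc (Suc n)) = [:0, 2:] * cheb_T (Suc n) - cheb_T n"

fun cheb_U :: "nat \<Rightarrow> 'a::comm_ring_1 poly" where
  "cheb_U 0 = 1"
| "cheb_U (Suc 0) = [:0, 2:]"
| "cheb_U (Suc (Suc n)) = [:0, 2:] * cheb_U (Suc n) - cheb_U n"

definition leg :: "'a::field \<Rightarrow> int" where
  "leg a = (if a = 0 then 0 else if (\<exists>y. y ^ 2 = a) then 1 else -1)"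

definition Bset :: "'a::field \<Rightarrow> int \<Rightarrow> int \<Rightarrow> 'a set" where
  "Bset lam e1 e2 = {b. leg (lam - b) = e1 \<and> leg (lam + b) = e2}"

end

theory Submission
  imports Defs "HOL-Number_Theory.Cong"
begin

text \<open>Fix \<open>b\<close> with \<open>b^2 \<noteq> 1\<close> and work in \<open>\<bbbF>\<^sub>q[x]\<close> modulo \<open>x^2 - 2bx + 1\<close>. There \<open>x\<close> and
  \<open>w = 2b - x\<close> are inverse to each other, so \<open>2 T\<^sub>n(b) \<equiv> x^n + w^n\<close> and
  \<open>(x - w) U\<^sub>n\<^sub>-\<^sub>1(b) \<equiv> x^n - w^n\<close>. As \<open>(x - b)^2 \<equiv> b^2 - 1\<close>, Frobenius and Euler's criterion
  give \<open>x^q \<equiv> x\<close> or \<open>x^q \<equiv> w\<close> according as \<open>b^2 - 1\<close> is a square or not, and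
  \<open>(x + 1)^2 \<equiv> 2(1 + b) x\<close> refines this to \<open>x^((q - e)/2) \<equiv> (2(1 + b) / q)\<close> where
  \<open>e = (b^2 - 1 / q)\<close>. So \<open>x^(2j) \<equiv> \<plusminus>1\<close> for the relevant \<open>j\<close>, which makes \<open>b\<close> a root of
  \<open>U\<^sub>j\<^sub>-\<^sub>1\<close> or of \<open>T\<^sub>j\<close>. In each part the two root sets are disjoint and together have as many
  elements as the two degrees add up to, so both polynomials split over them.\<close>

section \<open>Finite rings of prime characteristic\<close>

definition additive_subgroup :: "'a::ab_group_add set \<Rightarrow> bool" where
  "additive_subgroup S \<longleftrightarrow> 0 \<in> S \<and> (\<forall>x\<in>S. \<forall>y\<in>S. x - y \<in> S)"

lemma additive_subgroup_of_nat_mult: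
  fixes S :: "'a::ring_1 set"
  assumes "additive_subgroup S" "x \<in> S"
  shows "of_nat n * x \<in> S"
proof (induction n)
  case (Suc n)
  then have "of_nat n * x - (0 - x) \<in> S"
    using assms unfolding additive_subgroup_def by blast
  then show ?case
    by (simp add: algebra_simps)
qed (use assms in \<open>simp add: additive_subgroup_def\<close>)

definition adjoin_multiples :: "'a::comm_ring_1 set \<Rightarrow> 'a \<Rightarrow> 'a set" where
  "adjoin_multiples S e = (\<lambda>(s, c). s + of_nat c * e) ` (S \<times> {..<CHAR('a)})"

lemma additive_subgroup_adjoin_multiples:
  fixes S :: "'a::comm_ring_1 set"
  assumes "0 < CHAR('a)" "additive_subgroup S"
  shows "additive_subgroup (adjoin_multiples S e)"
  unfolding additive_subgroup_def
proof safe
  define p where "p = CHAR('a)"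
  show "0 \<in> adjoin_multiples S e"
    using assms unfolding adjoin_multiples_def additive_subgroup_def by force
  fix x y assume "x \<in> adjoin_multiples S e" "y \<in> adjoin_multiples S e"
  then obtain s c s' c' where "s \<in> S" "s' \<in> S" "c' < p"
    and xy: "x = s + of_nat c * e" "y = s' + of_nat c' * e"
    unfolding adjoin_multiples_def p_def by auto
  have "of_nat ((c + (p - c')) mod p) = (of_nat (c + (p - c')) :: 'a)"
    unfolding p_def of_nat_eq_iff_cong_CHAR cong_def by simp
  also have "\<dots> = of_nat c - of_nat c'"
    using \<open>c' < p\<close> unfolding p_def by (simp add: of_nat_diff)
  finally have "x - y = (s - s') + of_nat ((c + (p - c')) mod p) * e"
    unfolding xy by (simp add: algebra_simps flip: distrib_left)
  moreover have "s - s' \<in> S"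
    using assms(2) \<open>s \<in> S\<close> \<open>s' \<in> S\<close> by (simp add: additive_subgroup_def)
  ultimately show "x - y \<in> adjoin_multiples S e"
    using assms(1) unfolding adjoin_multiples_def p_def by force
qed

lemma card_adjoin_multiples:
  fixes S :: "'a::{comm_ring_1,finite} set"
  assumes p: "prime CHAR('a)" and "additive_subgroup S" "e \<notin> S"
  shows "card (adjoin_multiples S e) = CHAR('a) * card S"
proof -
  define p where "p = CHAR('a)"
  define h where "h = (\<lambda>(s, c). s + of_nat c * e :: 'a)"
  have key: "c = c'" if "s \<in> S" "s' \<in> S" "c' < c" "c < p" "h (s, c) = h (s', c')" for s s' c c'
  proof -
    have "\<not> p dvd c - c'"
      using that by (auto dest: dvd_imp_le)
    then have "coprime (c - c') p"
      using p prime_imp_coprime_nat unfolding p_def by (auto simp: coprime_commute)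
    then obtain k where k: "[(c - c') * k = 1] (mod p)"
      using cong_solve_coprime_nat by auto
    have "of_nat (c - c') * e = s' - s"
      using that(3,5) by (simp add: h_def algebra_simps)
    then have "of_nat k * (s' - s) = of_nat ((c - c') * k) * e"
      by (metis mult.assoc mult.commute of_nat_mult)
    also have "of_nat ((c - c') * k) = (1 :: 'a)"
      using k of_nat_eq_iff_cong_CHAR[where 'a='a, of "(c - c') * k" 1] unfolding p_def by simp
    finally have "e = of_nat k * (s' - s)"
      by simp
    moreover have "s' - s \<in> S"
      using assms(2) that(1,2) by (simp add: additive_subgroup_def)
    ultimately show ?thesis
      using additive_subgroup_of_nat_mult[OF assms(2)] assms(3) by metis
  qed
  have "inj_on h (S \<times> {..<p})"
  proof (rule inj_onI, clarify)
    fix s c s' c'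
    assume "s \<in> S" "c < p" "s' \<in> S" "c' < p" and eq: "h (s, c) = h (s', c')"
    then have "c = c'"
      using key[of s s' c' c] key[of s' s c c'] by (cases c c' rule: linorder_cases) auto
    then show "s = s' \<and> c = c'"
      using eq by (simp add: h_def)
  qed
  then show ?thesis
    unfolding adjoin_multiples_def p_def[symmetric] h_def[symmetric]
    by (simp add: card_image card_cartesian_product)
qed

text \<open>A finite ring of prime characteristic \<open>p\<close> is an \<open>\<bbbF>\<^sub>p\<close>-vector space; its additive
  subgroups are subspaces, built up one basis vector at a time.\<close>
lemma card_UNIV_eq_prime_char_power_mult:
  fixes S :: "'a::{comm_ring_1,finite} set"
  assumes p: "prime CHAR('a)" and "additive_subgroup S"
  shows "\<exists>r. card (UNIV :: 'a set) = CHAR('a) ^ r * card S"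
  using assms(2)
proof (induction "card (UNIV :: 'a set) - card S" arbitrary: S rule: less_induct)
  case less
  show ?case
  proof (cases "S = UNIV")
    case False
    then obtain e where "e \<notin> S"
      by auto
    define S' where "S' = adjoin_multiples S e"
    have card_S': "card S' = CHAR('a) * card S"
      unfolding S'_def using p less.prems \<open>e \<notin> S\<close> by (rule card_adjoin_multiples)
    have "card S < card S'"
      using card_S' less.prems prime_gt_1_nat[OF p]
      by (auto simp: card_gt_0_iff additive_subgroup_def)
    moreover have "card S' \<le> card (UNIV :: 'a set)"
      by (rule card_mono) auto
    ultimately have "card (UNIV :: 'a set) - card S' < card (UNIV :: 'a set) - card S"
      by linarith
    moreover have "additive_subgroup S'"
      unfolding S'_def using p less.prems
      by (intro additive_subgroup_adjoin_multiples) (simp_all add: prime_gt_0_nat)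
    ultimately obtain r where "card (UNIV :: 'a set) = CHAR('a) ^ r * card S'"
      using less.hyps by blast
    then show ?thesis
      using card_S' by (intro exI[of _ "Suc r"]) simp
  qed (intro exI[of _ 0], simp)
qed

lemma card_UNIV_prime_char_power:
  assumes "prime CHAR('a::{comm_ring_1,finite})"
  shows "\<exists>r. card (UNIV :: 'a set) = CHAR('a) ^ r"
  using card_UNIV_eq_prime_char_power_mult[OF assms, of "{0}"] by (simp add: additive_subgroup_def)

lemma prime_CHAR_finite_field: "prime CHAR('a::{field,finite})"
  by (intro prime_CHAR_semidom finite_imp_CHAR_pos) simp

lemma finite_field_power_card_minus_one:
  fixes x :: "'a::{field,finite}"
  assumes "x \<noteq> 0"
  shows "x ^ (card (UNIV :: 'a set) - 1) = 1"
proof -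
  define U where "U = UNIV - {0 :: 'a}"
  have "(*) x ` U = U"
  proof
    show "(*) x ` U \<subseteq> U"
      using assms by (auto simp: U_def)
    show "U \<subseteq> (*) x ` U"
    proof
      fix y assume "y \<in> U"
      then have "y = x * (y / x)" "y / x \<in> U"
        using assms by (auto simp: U_def)
      then show "y \<in> (*) x ` U" by blast
    qed
  qed
  then have "bij_betw ((*) x) U U"
    using assms by (auto simp: bij_betw_def inj_on_def)
  then have "\<Prod>U = (\<Prod>y\<in>U. x * y)"
    by (rule prod.reindex_bij_betw[where g = "\<lambda>y. y", symmetric])
  also have "\<dots> = x ^ card U * \<Prod>U"
    by (simp add: prod.distrib)
  finally have "x ^ card U = 1"
    unfolding U_def by (simp add: prod_zero_iff)
  then show ?thesis
    by (simp add: U_def card_Diff_singleton)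
qed

lemma finite_field_power_card: "x ^ card (UNIV :: 'a set) = (x :: 'a::{field,finite})"
proof (cases "x = 0")
  case False
  have "card (UNIV :: 'a set) = Suc (card (UNIV :: 'a set) - 1)"
    using finite_UNIV_card_ge_0[where 'a='a] by simp
  then have "x ^ card (UNIV :: 'a set) = x * x ^ (card (UNIV :: 'a set) - 1)"
    by (metis power_Suc)
  also have "\<dots> = x"
    using finite_field_power_card_minus_one[OF False] by simp
  finally show ?thesis .
qed (simp add: finite_UNIV_card_ge_0)

lemma finite_field_poly_power_card_add:
  fixes p q :: "'a::{field,finite} poly"
  shows "(p + q) ^ card (UNIV :: 'a set) = p ^ card (UNIV :: 'a set) + q ^ card (UNIV :: 'a set)"
proof -
  obtain r where "card (UNIV :: 'a set) = CHAR('a) ^ r"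
    using card_UNIV_prime_char_power prime_CHAR_finite_field by blast
  then show ?thesis
    using prime_CHAR_finite_field[where 'a='a] by (intro freshmans_dream') simp_all
qed

lemma finite_field_card_ge_2: "2 \<le> card (UNIV :: 'a::{field,finite} set)"
proof -
  have "card {0, 1 :: 'a} \<le> card (UNIV :: 'a set)"
    by (rule card_mono) auto
  then show ?thesis
    by simp
qed

lemma finite_field_odd_card_two_neq_zero:
  assumes "odd (card (UNIV :: 'a::{field,finite} set))"
  shows "(2 :: 'a) \<noteq> 0"
proof
  assume "(2 :: 'a) = 0"
  then have "CHAR('a) dvd 2"
    using of_nat_eq_0_iff_char_dvd[where 'a='a, of 2] by simp
  then have "CHAR('a) = 2"
    using prime_CHAR_finite_field[where 'a='a] two_is_prime_nat by (simp add: primes_dvd_imp_eq)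
  moreover obtain r where "card (UNIV :: 'a set) = CHAR('a) ^ r"
    using card_UNIV_prime_char_power prime_CHAR_finite_field by blast
  ultimately show False
    using assms finite_field_card_ge_2[where 'a='a] by (cases r) auto
qed

lemma finite_field_odd_card_ge_3:
  assumes "odd (card (UNIV :: 'a::{field,finite} set))"
  shows "3 \<le> card (UNIV :: 'a set)"
  using assms finite_field_card_ge_2[where 'a='a] by presburger

section \<open>The quadratic character\<close>

lemma leg_0 [simp]: "leg 0 = 0"
  by (simp add: leg_def)

lemma leg_eq_0_iff [simp]: "leg a = 0 \<longleftrightarrow> a = 0"
  by (simp add: leg_def)

lemma leg_nonzero_cases: "a \<noteq> 0 \<Longrightarrow> leg a = 1 \<or> leg a = -1"
  by (simp add: leg_def)

lemma abs_leg_le_one: "\<bar>leg a\<bar> \<le> 1"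
  by (simp add: leg_def)

lemma of_int_eq_iff_abs_le_one:
  assumes "(2 :: 'a::field) \<noteq> 0" "\<bar>i\<bar> \<le> 1" "\<bar>j\<bar> \<le> 1"
  shows "(of_int i :: 'a) = of_int j \<longleftrightarrow> i = j"
proof -
  have "(1 :: 'a) \<noteq> -1"
    using assms(1) by (metis add_eq_0_iff one_add_one)
  moreover have "i \<in> {-1, 0, 1}" "j \<in> {-1, 0, 1}"
    using assms(2,3) by auto
  ultimately show ?thesis
    by auto
qed

lemma card_roots_power_eq_one_le:
  assumes "0 < k"
  shows "card {x :: 'a::idom. x ^ k = 1} \<le> k"
proof -
  define p :: "'a poly" where "p = [:-1:] + monom 1 k"
  have "degree p = k"
    using assms unfolding p_def by (simp add: degree_add_eq_right degree_monom_eq)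
  then have "p \<noteq> 0"
    using assms by auto
  have "{x. x ^ k = 1} = {x. poly p x = 0}"
    by (simp add: p_def poly_monom)
  also have "card \<dots> \<le> k"
    using card_poly_roots_bound[OF \<open>p \<noteq> 0\<close>] \<open>degree p = k\<close> by simp
  finally show ?thesis .
qed

lemma card_nonzero_le_twice_card_squares:
  "card (UNIV - {0 :: 'a::{idom,finite}}) \<le> 2 * card ((\<lambda>y :: 'a. y ^ 2) ` (UNIV - {0}))"
proof -
  define Q where "Q = (\<lambda>y :: 'a. y ^ 2) ` (UNIV - {0})"
  have fibre: "card {y :: 'a. y ^ 2 = s} \<le> 2" for s
  proof -
    have "{y :: 'a. y ^ 2 = s} = {y. poly [:-s, 0, 1:] y = 0}"
      by (auto simp: power2_eq_square)
    also have "card \<dots> \<le> 2"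
      using card_poly_roots_bound[of "[:-s, 0, 1:]"] by simp
    finally show ?thesis .
  qed
  have "card (UNIV - {0 :: 'a}) \<le> card (\<Union>s\<in>Q. {y. y ^ 2 = s})"
    by (rule card_mono) (auto simp: Q_def)
  also have "\<dots> \<le> (\<Sum>s\<in>Q. card {y :: 'a. y ^ 2 = s})"
    by (rule card_UN_le) simp
  also have "\<dots> \<le> (\<Sum>s\<in>Q. 2)"
    by (rule sum_mono) (rule fibre)
  finally show ?thesis
    by (simp add: Q_def mult.commute)
qed

lemma finite_field_square_power_half:
  fixes y :: "'a::{field,finite}"
  assumes "odd (card (UNIV :: 'a set))" "y \<noteq> 0"
  shows "(y ^ 2) ^ ((card (UNIV :: 'a set) - 1) div 2) = 1"
proof -
  have "2 * ((card (UNIV :: 'a set) - 1) div 2) = card (UNIV :: 'a set) - 1"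
    using assms(1) by presburger
  then show ?thesis
    using finite_field_power_card_minus_one[OF assms(2)] by (simp flip: power_mult)
qed

text \<open>The nonzero squares are \<open>(q - 1)/2\<close> distinct roots of \<open>x^((q - 1)/2) - 1\<close>, so a
  non-square cannot be another one.\<close>
lemma finite_field_nonsquare_power_half_neq_1:
  fixes a :: "'a::{field,finite}"
  assumes q: "odd (card (UNIV :: 'a set))" and "\<nexists>y. y ^ 2 = a"
  shows "a ^ ((card (UNIV :: 'a set) - 1) div 2) \<noteq> 1"
proof
  define k where "k = (card (UNIV :: 'a set) - 1) div 2"
  define Q where "Q = (\<lambda>y :: 'a. y ^ 2) ` (UNIV - {0})"
  assume "a ^ ((card (UNIV :: 'a set) - 1) div 2) = 1"
  then have "insert a Q \<subseteq> {x. x ^ k = 1}"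
    using finite_field_square_power_half[OF q] by (auto simp: Q_def k_def)
  then have "card (insert a Q) \<le> card {x :: 'a. x ^ k = 1}"
    by (intro card_mono) simp_all
  also have "\<dots> \<le> k"
    using finite_field_odd_card_ge_3[OF q] by (intro card_roots_power_eq_one_le) (simp add: k_def)
  finally have "card (insert a Q) \<le> k" .
  moreover have "a \<notin> Q"
    using assms(2) by (auto simp: Q_def)
  moreover have "2 * k \<le> 2 * card Q"
    using card_nonzero_le_twice_card_squares[where 'a='a] q
    by (simp add: Q_def k_def card_Diff_singleton)
  ultimately show False
    by (simp add: Q_def)
qed

lemma finite_field_euler_criterion:
  fixes a :: "'a::{field,finite}"
  assumes q: "odd (card (UNIV :: 'a set))"
  shows "a ^ ((card (UNIV :: 'a set) - 1) div 2) = of_int (leg a)"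
proof (cases "\<exists>y. y ^ 2 = a")
  case True
  then obtain y where "y ^ 2 = a"
    by blast
  then show ?thesis
    using finite_field_square_power_half[OF q, of y] finite_field_odd_card_ge_3[OF q]
    by (cases "a = 0") (auto simp: leg_def)
next
  case False
  then have "a \<noteq> 0"
    by (metis zero_power2)
  have "(a ^ ((card (UNIV :: 'a set) - 1) div 2)) ^ 2 = 1"
    using finite_field_square_power_half[OF q \<open>a \<noteq> 0\<close>] by (simp flip: power_mult mult.commute)
  with finite_field_nonsquare_power_half_neq_1[OF q False]
  have "a ^ ((card (UNIV :: 'a set) - 1) div 2) = -1"
    by (simp add: power2_eq_1_iff)
  with False \<open>a \<noteq> 0\<close> show ?thesis
    by (simp add: leg_def)
qed

lemma leg_mult:
  fixes a b :: "'a::{field,finite}"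
  assumes "odd (card (UNIV :: 'a set))"
  shows "leg (a * b) = leg a * leg b"
proof -
  have "(of_int (leg (a * b)) :: 'a) = of_int (leg a * leg b)"
    using finite_field_euler_criterion[OF assms] by (metis of_int_mult power_mult_distrib)
  moreover have "\<bar>leg a * leg b\<bar> \<le> 1"
    using abs_leg_le_one[of a] abs_leg_le_one[of b] by (simp add: abs_mult mult_le_one)
  ultimately show ?thesis
    using of_int_eq_iff_abs_le_one[OF finite_field_odd_card_two_neq_zero[OF assms]] abs_leg_le_one
    by blast
qed

lemma leg_square_eq_1: "a \<noteq> 0 \<Longrightarrow> leg a * leg a = 1"
  using leg_nonzero_cases[of a] by auto

lemma leg_square_minus_one:
  fixes b :: "'a::{field,finite}"
  assumes "odd (card (UNIV :: 'a set))"
  shows "leg (b ^ 2 - 1) = leg (-1 :: 'a) * leg (1 - b) * leg (1 + b)"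
proof -
  have "b ^ 2 - 1 = -1 * ((1 - b) * (1 + b))"
    by (simp add: power2_eq_square algebra_simps)
  then have "leg (b ^ 2 - 1) = leg (-1 :: 'a) * (leg (1 - b) * leg (1 + b))"
    by (simp only: leg_mult[OF assms])
  then show ?thesis
    by (simp only: mult.assoc)
qed

lemma four_dvd_card_minus_leg_minus_one:
  assumes q: "odd (card (UNIV :: 'a::{field,finite} set))"
  shows "4 dvd int (card (UNIV :: 'a set)) - leg (-1 :: 'a)"
proof -
  define k where "k = (card (UNIV :: 'a set) - 1) div 2"
  have card_eq: "card (UNIV :: 'a set) = Suc (2 * k)"
    using q unfolding k_def by presburger
  have euler: "(-1 :: 'a) ^ k = of_int (leg (-1 :: 'a))"
    using finite_field_euler_criterion[OF q] by (simp add: k_def)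
  have "leg (-1 :: 'a) = (if even k then 1 else -1)"
    using euler of_int_eq_iff_abs_le_one[OF finite_field_odd_card_two_neq_zero[OF q]
        abs_leg_le_one[of "-1 :: 'a"], of "if even k then 1 else -1"]
    by (auto split: if_splits)
  then show ?thesis
    using card_eq by (auto elim!: evenE oddE)
qed

lemma degree_cheb_T_le_and_coeff:
  "degree (cheb_T n :: 'a::comm_ring_1 poly) \<le> n \<and> coeff (cheb_T n :: 'a poly) n = 2 ^ (n - 1)"
proof (induction n rule: cheb_T.induct)
  case (3 n)
  then have "degree (cheb_T (Suc (Suc n)) :: 'a poly) \<le> Suc (Suc n)"
    by (auto simp: mult_pCons_left intro!: degree_diff_le order.trans[OF degree_pCons_le]
        order.trans[OF degree_smult_le])
  moreover have "coeff (cheb_T n :: 'a poly) (Suc (Suc n)) = 0"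
    using 3 by (intro coeff_eq_0) linarith
  ultimately show ?case
    using 3 by (simp add: mult_pCons_left)
qed simp_all

lemma degree_cheb_U_le_and_coeff:
  "degree (cheb_U n :: 'a::comm_ring_1 poly) \<le> n \<and> coeff (cheb_U n :: 'a poly) n = 2 ^ n"
proof (induction n rule: cheb_U.induct)
  case (3 n)
  then have "degree (cheb_U (Suc (Suc n)) :: 'a poly) \<le> Suc (Suc n)"
    by (auto simp: mult_pCons_left intro!: degree_diff_le order.trans[OF degree_pCons_le]
        order.trans[OF degree_smult_le])
  moreover have "coeff (cheb_U n :: 'a poly) (Suc (Suc n)) = 0"
    using 3 by (intro coeff_eq_0) linarith
  ultimately show ?case
    using 3 by (simp add: mult_pCons_left)
qed simp_all

lemma
  assumes "(2 :: 'a::idom) \<noteq> 0"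
  shows degree_cheb_T: "degree (cheb_T n :: 'a poly) = n"
    and lead_coeff_cheb_T: "lead_coeff (cheb_T n :: 'a poly) = 2 ^ (n - 1)"
    and cheb_T_nonzero: "cheb_T n \<noteq> (0 :: 'a poly)"
proof -
  show "degree (cheb_T n :: 'a poly) = n"
    using degree_cheb_T_le_and_coeff[where 'a='a, of n] assms by (metis antisym le_degree power_not_zero)
  then show "lead_coeff (cheb_T n :: 'a poly) = 2 ^ (n - 1)"
    using degree_cheb_T_le_and_coeff[where 'a='a, of n] by simp
  with assms show "cheb_T n \<noteq> (0 :: 'a poly)"
    by (metis leading_coeff_0_iff power_not_zero)
qed

lemma
  assumes "(2 :: 'a::idom) \<noteq> 0"
  shows degree_cheb_U: "degree (cheb_U n :: 'a poly) = n"
    and lead_coeff_cheb_U: "lead_coeff (cheb_U n :: 'a poly) = 2 ^ n"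
    and cheb_U_nonzero: "cheb_U n \<noteq> (0 :: 'a poly)"
proof -
  show "degree (cheb_U n :: 'a poly) = n"
    using degree_cheb_U_le_and_coeff[where 'a='a, of n] assms by (metis antisym le_degree power_not_zero)
  then show "lead_coeff (cheb_U n :: 'a poly) = 2 ^ n"
    using degree_cheb_U_le_and_coeff[where 'a='a, of n] by simp
  with assms show "cheb_U n \<noteq> (0 :: 'a poly)"
    by (metis leading_coeff_0_iff power_not_zero)
qed

lemma poly_eq_smult_prod_roots:
  fixes p :: "'a::idom poly"
  assumes "finite S" "card S = degree p" "\<And>b. b \<in> S \<Longrightarrow> poly p b = 0"
  shows "p = smult (lead_coeff p) (\<Prod>b\<in>S. [:-b, 1:])"
proof -
  define q where "q = (\<Prod>b\<in>S. [:-b, 1 :: 'a:])"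
  have "lead_coeff q = 1"
    unfolding q_def lead_coeff_prod by simp
  moreover have "degree q = card S"
    unfolding q_def by (simp add: degree_prod_sum_eq)
  ultimately have q: "degree q = card S" "coeff q (card S) = 1"
    by simp_all
  show ?thesis
    unfolding q_def[symmetric]
  proof (rule poly_eqI_degree_lead_coeff[where A = S and n = "degree p"])
    show "poly p b = poly (smult (lead_coeff p) q) b" if "b \<in> S" for b
      using that assms(1,3) by (simp add: q_def poly_prod)
  qed (use q assms(2) in auto)
qed

lemma card_roots_le_degree:
  fixes p :: "'a::idom poly"
  assumes "p \<noteq> 0" "\<And>b. b \<in> S \<Longrightarrow> poly p b = 0"
  shows "card S \<le> degree p"
proof -
  have "card S \<le> card {x. poly p x = 0}"
    using assms by (intro card_mono poly_roots_finite) auto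
  also have "\<dots> \<le> degree p"
    by (rule card_poly_roots_bound[OF assms(1)])
  finally show ?thesis .
qed

lemma smult_prod_roots_if_disjoint_roots_fill_degrees:
  fixes p q :: "'a::idom poly"
  assumes "p \<noteq> 0" "q \<noteq> 0" "finite A" "finite B" "A \<inter> B = {}"
    and "card (A \<union> B) = degree p + degree q"
    and "\<And>b. b \<in> A \<Longrightarrow> poly p b = 0" "\<And>b. b \<in> B \<Longrightarrow> poly q b = 0"
  shows "card A = degree p" "card B = degree q"
    and "p = smult (lead_coeff p) (\<Prod>b\<in>A. [:-b, 1:])"
    and "q = smult (lead_coeff q) (\<Prod>b\<in>B. [:-b, 1:])"
proof -
  have "card A + card B = degree p + degree q"
    using assms(3-6) by (simp add: card_Un_disjoint)
  moreover have "card A \<le> degree p" "card B \<le> degree q"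
    using card_roots_le_degree assms(1,2,7,8) by blast+
  ultimately show "card A = degree p" "card B = degree q"
    by linarith+
  then show "p = smult (lead_coeff p) (\<Prod>b\<in>A. [:-b, 1:])"
    and "q = smult (lead_coeff q) (\<Prod>b\<in>B. [:-b, 1:])"
    using poly_eq_smult_prod_roots assms(3,4,7,8) by blast+
qed

lemma smult_two_power: "smult (2 ^ n) p = 2 ^ n * (p :: 'a::comm_ring_1 poly)"
  by (simp only: numeral_poly poly_const_pow) simp

section \<open>Chebyshev values modulo \<open>x\<^sup>2 - 2bx + 1\<close>\<close>

lemma cong_mult_lcancel_invertible:
  fixes k k' a b m :: "'a::unique_euclidean_ring"
  assumes "[k * k' = 1] (mod m)"
  shows "[k * a = k * b] (mod m) \<longleftrightarrow> [a = b] (mod m)"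
proof
  have inverse: "[k' * (k * c) = c] (mod m)" for c
    using cong_scalar_right[OF assms, of c] by (simp add: ac_simps)
  assume "[k * a = k * b] (mod m)"
  then have "[k' * (k * a) = k' * (k * b)] (mod m)"
    by (rule cong_scalar_left)
  then show "[a = b] (mod m)"
    using inverse by (meson cong_sym cong_trans)
qed (rule cong_scalar_left)

lemma cong_const_poly_0_iff:
  fixes m :: "'a::field poly"
  assumes "0 < degree m"
  shows "[[:c:] = 0] (mod m) \<longleftrightarrow> c = 0"
proof
  assume "[[:c:] = 0] (mod m)"
  then have "m dvd [:c:]"
    by (simp add: cong_0_iff)
  with assms show "c = 0"
    by (metis degree_pCons_0 dvd_imp_degree_le not_le pCons_eq_0_iff)
qed simp

lemma cong_second_order_recurrence:
  fixes X Y :: "nat \<Rightarrow> 'a::unique_euclidean_ring"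
  assumes "\<And>n. [X (Suc (Suc n)) = s * X (Suc n) - X n] (mod m)"
    and "\<And>n. [Y (Suc (Suc n)) = s * Y (Suc n) - Y n] (mod m)"
    and "[X 0 = Y 0] (mod m)" "[X 1 = Y 1] (mod m)"
  shows "[X n = Y n] (mod m)"
proof -
  have "[X n = Y n] (mod m) \<and> [X (Suc n) = Y (Suc n)] (mod m)"
  proof (induction n)
    case (Suc n)
    then have "[s * X (Suc n) - X n = s * Y (Suc n) - Y n] (mod m)"
      by (intro cong_diff cong_scalar_left) auto
    then have "[X (Suc (Suc n)) = Y (Suc (Suc n))] (mod m)"
      using assms(1,2) by (meson cong_sym cong_trans)
    with Suc show ?case by simp
  qed (use assms(3,4) in simp)
  then show ?thesis ..
qed

lemma cong_power_sum_recurrence: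
  fixes z w c d m :: "'a::unique_euclidean_ring"
  assumes "[z * w = 1] (mod m)"
  shows "[c * z ^ Suc (Suc n) + d * w ^ Suc (Suc n)
          = (z + w) * (c * z ^ Suc n + d * w ^ Suc n) - (c * z ^ n + d * w ^ n)] (mod m)"
proof -
  have "m dvd (z * w - 1) * (c * z ^ n + d * w ^ n)"
    using assms by (simp add: cong_iff_dvd_diff)
  moreover have "c * z ^ Suc (Suc n) + d * w ^ Suc (Suc n)
      - ((z + w) * (c * z ^ Suc n + d * w ^ Suc n) - (c * z ^ n + d * w ^ n))
      = - ((z * w - 1) * (c * z ^ n + d * w ^ n))"
    by (simp add: algebra_simps)
  ultimately show ?thesis
    unfolding cong_iff_dvd_diff by (metis dvd_minus_iff)
qed

lemma cheb_T_cong_power_sum: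
  fixes z w m :: "'a::field poly"
  assumes zw: "[z * w = 1] (mod m)" and sum: "z + w = [:2 * b:]"
  shows "[[:2 * poly (cheb_T n) b:] = z ^ n + w ^ n] (mod m)"
proof -
  define X where "X n = [:2 * poly (cheb_T n) b:]" for n
  define Y where "Y n = 1 * z ^ n + 1 * w ^ n" for n
  have "[X n = Y n] (mod m)"
  proof (rule cong_second_order_recurrence[where s = "z + w"])
    show "[X (Suc (Suc n)) = (z + w) * X (Suc n) - X n] (mod m)" for n
      unfolding X_def sum by (simp add: algebra_simps)
    show "[Y (Suc (Suc n)) = (z + w) * Y (Suc n) - Y n] (mod m)" for n
      unfolding Y_def by (rule cong_power_sum_recurrence[OF zw])
    show "[X 0 = Y 0] (mod m)" "[X 1 = Y 1] (mod m)"
      unfolding X_def Y_def using sum by (simp_all add: numeral_poly add.commute)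
  qed
  then show ?thesis
    by (simp add: X_def Y_def)
qed

lemma cheb_U_cong_power_diff:
  fixes z w m :: "'a::field poly"
  assumes zw: "[z * w = 1] (mod m)" and sum: "z + w = [:2 * b:]"
  shows "[(z - w) * [:poly (cheb_U n) b:] = z ^ Suc n - w ^ Suc n] (mod m)"
proof -
  define X where "X n = (z - w) * [:poly (cheb_U n) b:]" for n
  define Y where "Y n = z * z ^ n + (- w) * w ^ n" for n
  have "[X n = Y n] (mod m)"
  proof (rule cong_second_order_recurrence[where s = "z + w"])
    show "[X (Suc (Suc n)) = (z + w) * X (Suc n) - X n] (mod m)" for n
      unfolding X_def sum by (simp add: algebra_simps smult_diff_left)
    show "[Y (Suc (Suc n)) = (z + w) * Y (Suc n) - Y n] (mod m)" for n
      unfolding Y_def by (rule cong_power_sum_recurrence[OF zw])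
    show "[X 0 = Y 0] (mod m)"
      by (simp add: X_def Y_def)
    show "[X 1 = Y 1] (mod m)"
      unfolding X_def Y_def using sum[symmetric] by (simp add: algebra_simps power2_eq_square)
  qed
  then show ?thesis
    by (simp add: X_def Y_def)
qed

text \<open>\<open>x^2 - 2bx + 1\<close>, whose roots \<open>z\<close> are those with \<open>z + z\<^sup>-\<^sup>1 = 2b\<close>.\<close>
definition cheb_modulus :: "'a::comm_ring_1 \<Rightarrow> 'a poly" where
  "cheb_modulus b = [:1, -2 * b, 1:]"

lemma degree_cheb_modulus [simp]: "degree (cheb_modulus b) = 2"
  by (simp add: cheb_modulus_def)

lemma x_mult_conj_cong: "[[:0, 1:] * [:2 * b, -1:] = 1] (mod cheb_modulus (b :: 'a::field))"
proof -
  have "[:0, 1:] * [:2 * b, -1:] - 1 = - cheb_modulus b"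
    by (simp add: cheb_modulus_def one_pCons)
  then show ?thesis
    by (simp add: cong_iff_dvd_diff)
qed

lemma x_minus_square_cong: "[[:-b, 1:] ^ 2 = [:b ^ 2 - 1:]] (mod cheb_modulus (b :: 'a::field))"
proof -
  have "[:-b, 1:] ^ 2 - [:b ^ 2 - 1:] = cheb_modulus b"
    by (simp add: cheb_modulus_def power2_eq_square algebra_simps)
  then show ?thesis
    by (simp add: cong_iff_dvd_diff)
qed

lemma x_plus_one_square_cong:
  "[[:1, 1:] ^ 2 = [:2 * (1 + b):] * [:0, 1:]] (mod cheb_modulus (b :: 'a::field))"
proof -
  have "[:1, 1:] ^ 2 - [:2 * (1 + b):] * [:0, 1:] = cheb_modulus b"
    by (simp add: cheb_modulus_def power2_eq_square one_pCons algebra_simps)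
  then show ?thesis
    by (simp add: cong_iff_dvd_diff)
qed

lemma x_power_mult_conj_power_cong:
  "[[:0, 1:] ^ n * [:2 * b, -1:] ^ n = 1] (mod cheb_modulus (b :: 'a::field))"
  using cong_pow[OF x_mult_conj_cong[of b], of n] by (simp only: power_mult_distrib power_one)

lemma x_minus_conj_invertible_cong:
  fixes b :: "'a::field"
  assumes "(2 :: 'a) \<noteq> 0" "b ^ 2 \<noteq> 1"
  shows "[([:0, 1:] - [:2 * b, -1:]) * ([:-b, 1:] * [:inverse (2 * (b ^ 2 - 1)):]) = 1]
         (mod cheb_modulus b)"
proof -
  define e where "e = 2 * (b ^ 2 - 1)"
  have "e \<noteq> 0"
    using assms by (simp add: e_def)
  have "([:0, 1:] - [:2 * b, -1:]) * ([:-b, 1:] * [:inverse e:])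
      = [:2:] * [:-b, 1:] ^ 2 * [:inverse e:]"
    by (simp add: power2_eq_square algebra_simps)
  also have "[[:2:] * [:-b, 1:] ^ 2 * [:inverse e:]
      = [:2:] * [:b ^ 2 - 1:] * [:inverse e:]] (mod cheb_modulus b)"
    by (intro cong_scalar_right cong_scalar_left x_minus_square_cong)
  also have "[:2:] * [:b ^ 2 - 1:] * [:inverse e:] = [:e * inverse e:]"
    by (simp add: e_def)
  also have "\<dots> = 1"
    using \<open>e \<noteq> 0\<close> by (simp add: one_pCons)
  finally show ?thesis
    by (simp only: e_def)
qed

lemma two_mult_one_plus_neq_0:
  fixes b :: "'a::field"
  assumes "(2 :: 'a) \<noteq> 0" "b ^ 2 \<noteq> 1"
  shows "2 * (1 + b) \<noteq> 0"
proof
  assume "2 * (1 + b) = 0"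
  with assms(1) have "1 + b = 0"
    by (metis mult_eq_0_iff)
  then have "b = -1"
    by (simp add: add_eq_0_iff)
  with assms(2) show False
    by simp
qed

lemma x_plus_one_invertible_cong:
  fixes b :: "'a::field"
  assumes "2 * (1 + b) \<noteq> 0"
  shows "[[:1, 1:] * ([:1, 1:] * [:2 * b, -1:] * [:inverse (2 * (1 + b)):]) = 1] (mod cheb_modulus b)"
proof -
  define e where "e = 2 * (1 + b)"
  have "[:1, 1:] * ([:1, 1:] * [:2 * b, -1:] * [:inverse e:]) = [:1, 1:] ^ 2 * ([:2 * b, -1:] * [:inverse e:])"
    by (simp only: power2_eq_square mult.assoc)
  also have "[\<dots> = ([:e:] * [:0, 1:]) * ([:2 * b, -1:] * [:inverse e:])] (mod cheb_modulus b)"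
    unfolding e_def by (intro cong_scalar_right x_plus_one_square_cong)
  also have "([:e:] * [:0, 1:]) * ([:2 * b, -1:] * [:inverse e:])
      = ([:e:] * [:inverse e:]) * ([:0, 1:] * [:2 * b, -1:])"
    by (simp only: ac_simps)
  also have "[:e:] * [:inverse e:] = 1"
    using assms by (simp add: e_def one_pCons)
  finally show ?thesis
    using x_mult_conj_cong[of b] by (simp add: e_def cong_trans)
qed

lemma poly_cheb_U_eq_0_if_x_power_cong_1:
  fixes b :: "'a::field"
  assumes "(2 :: 'a) \<noteq> 0" "b ^ 2 \<noteq> 1" "0 < j"
    and "[[:0, 1:] ^ (2 * j) = 1] (mod cheb_modulus b)"
  shows "poly (cheb_U (j - 1)) b = 0"
proof -
  define z w :: "'a poly" where "z = [:0, 1:]" and "w = [:2 * b, -1:]"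
  define u where "u = [:poly (cheb_U (j - 1)) b:]"
  have zw: "[z * w = 1] (mod cheb_modulus b)"
    unfolding z_def w_def by (rule x_mult_conj_cong)
  have zw_pow: "[z ^ j * w ^ j = 1] (mod cheb_modulus b)"
    unfolding z_def w_def by (rule x_power_mult_conj_power_cong)
  have "[z ^ j * ((z - w) * u) = z ^ j * (z ^ j - w ^ j)] (mod cheb_modulus b)"
    using cheb_U_cong_power_diff[OF zw, of b "j - 1"] assms(3)
    by (intro cong_scalar_left) (simp add: z_def w_def u_def)
  also have "z ^ j * (z ^ j - w ^ j) = z ^ (2 * j) - z ^ j * w ^ j"
    by (simp add: algebra_simps power_mult power2_eq_square flip: power_mult_distrib)
  also have "[z ^ (2 * j) - z ^ j * w ^ j = 1 - 1] (mod cheb_modulus b)"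
    using assms(4) zw_pow unfolding z_def by (rule cong_diff)
  finally have "[z ^ j * ((z - w) * u) = z ^ j * ((z - w) * 0)] (mod cheb_modulus b)"
    by simp
  then have "[u = 0] (mod cheb_modulus b)"
    using cong_mult_lcancel_invertible[OF zw_pow]
      cong_mult_lcancel_invertible[OF x_minus_conj_invertible_cong[OF assms(1,2)]]
    unfolding z_def w_def by blast
  then show ?thesis
    by (simp add: u_def cong_const_poly_0_iff)
qed

lemma poly_cheb_T_eq_0_if_x_power_cong_minus_1:
  fixes b :: "'a::field"
  assumes "(2 :: 'a) \<noteq> 0" "[[:0, 1:] ^ (2 * j) = -1] (mod cheb_modulus b)"
  shows "poly (cheb_T j) b = 0"
proof -
  define z w :: "'a poly" where "z = [:0, 1:]" and "w = [:2 * b, -1:]"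
  have zw: "[z * w = 1] (mod cheb_modulus b)"
    unfolding z_def w_def by (rule x_mult_conj_cong)
  have zw_pow: "[z ^ j * w ^ j = 1] (mod cheb_modulus b)"
    unfolding z_def w_def by (rule x_power_mult_conj_power_cong)
  have "[z ^ j * [:2 * poly (cheb_T j) b:] = z ^ j * (z ^ j + w ^ j)] (mod cheb_modulus b)"
    using cheb_T_cong_power_sum[OF zw, of b j]
    by (intro cong_scalar_left) (simp add: z_def w_def)
  also have "z ^ j * (z ^ j + w ^ j) = z ^ (2 * j) + z ^ j * w ^ j"
    by (simp add: algebra_simps power_mult power2_eq_square flip: power_mult_distrib)
  also have "[z ^ (2 * j) + z ^ j * w ^ j = -1 + 1] (mod cheb_modulus b)"
    using assms(2) zw_pow unfolding z_def by (rule cong_add)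
  finally have "[z ^ j * [:2 * poly (cheb_T j) b:] = z ^ j * 0] (mod cheb_modulus b)"
    by simp
  then have "[[:2 * poly (cheb_T j) b:] = 0] (mod cheb_modulus b)"
    using cong_mult_lcancel_invertible[OF zw_pow] by blast
  with assms(1) show ?thesis
    by (simp add: cong_const_poly_0_iff)
qed

section \<open>Frobenius modulo \<open>x\<^sup>2 - 2bx + 1\<close>\<close>

lemma finite_field_cong_power_card:
  fixes s t m :: "'a::{field,finite} poly"
  assumes "odd (card (UNIV :: 'a set))" "[s ^ 2 = [:a:] * t] (mod m)"
  shows "[s ^ card (UNIV :: 'a set)
          = [:of_int (leg a):] * s * t ^ ((card (UNIV :: 'a set) - 1) div 2)] (mod m)"
proof -
  define k where "k = (card (UNIV :: 'a set) - 1) div 2"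
  have "card (UNIV :: 'a set) = Suc (2 * k)"
    using assms(1) unfolding k_def by presburger
  then have "s ^ card (UNIV :: 'a set) = s * (s ^ 2) ^ k"
    by (simp add: power_mult)
  also have "[s * (s ^ 2) ^ k = s * ([:a:] * t) ^ k] (mod m)"
    by (intro cong_scalar_left cong_pow assms(2))
  also have "s * ([:a:] * t) ^ k = [:a ^ k:] * s * t ^ k"
    by (simp only: power_mult_distrib poly_const_pow mult_ac)
  finally show ?thesis
    using finite_field_euler_criterion[OF assms(1), of a] by (simp add: k_def)
qed

lemma finite_field_linear_power_card:
  "[:c, 1:] ^ card (UNIV :: 'a set) = [:0, 1:] ^ card (UNIV :: 'a set) + [:c :: 'a::{field,finite}:]"
proof -
  have "[:c, 1:] ^ card (UNIV :: 'a set) = ([:0, 1:] + [:c:]) ^ card (UNIV :: 'a set)"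
    by simp
  also have "\<dots> = [:0, 1:] ^ card (UNIV :: 'a set) + [:c:] ^ card (UNIV :: 'a set)"
    by (rule finite_field_poly_power_card_add)
  also have "[:c:] ^ card (UNIV :: 'a set) = [:c:]"
    by (simp only: poly_const_pow finite_field_power_card)
  finally show ?thesis .
qed

lemma x_power_card_cong:
  fixes b :: "'a::{field,finite}"
  assumes "odd (card (UNIV :: 'a set))"
  shows "[[:0, 1:] ^ card (UNIV :: 'a set)
          = [:b:] + [:of_int (leg (b ^ 2 - 1)):] * [:-b, 1:]] (mod cheb_modulus b)"
proof -
  have "[[:-b, 1:] ^ 2 = [:b ^ 2 - 1:] * 1] (mod cheb_modulus b)"
    using x_minus_square_cong[of b] by simp
  from finite_field_cong_power_card[OF assms this]
  have "[[:-b, 1:] ^ card (UNIV :: 'a set) = [:of_int (leg (b ^ 2 - 1)):] * [:-b, 1:]] (mod cheb_modulus b)"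
    by (simp only: power_one mult_1_right)
  then have "[[:b:] + [:-b, 1:] ^ card (UNIV :: 'a set)
             = [:b:] + [:of_int (leg (b ^ 2 - 1)):] * [:-b, 1:]] (mod cheb_modulus b)"
    by (rule cong_add[OF cong_refl])
  moreover have "[:b:] + [:-b, 1:] ^ card (UNIV :: 'a set) = [:0, 1:] ^ card (UNIV :: 'a set)"
    unfolding finite_field_linear_power_card[of "-b"] by (simp add: minus_pCons[symmetric])
  ultimately show ?thesis
    by simp
qed

lemma x_plus_one_power_card_cong:
  fixes b :: "'a::{field,finite}"
  assumes "odd (card (UNIV :: 'a set))"
  shows "[[:0, 1:] ^ card (UNIV :: 'a set) + 1
          = [:of_int (leg (2 * (1 + b))):] * [:1, 1:] * [:0, 1:] ^ ((card (UNIV :: 'a set) - 1) div 2)]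
         (mod cheb_modulus b)"
  using finite_field_cong_power_card[OF assms x_plus_one_square_cong[of b]]
  unfolding finite_field_linear_power_card[of 1] by (simp add: one_pCons)

lemma cong_x_plus_one_power_card_iff:
  fixes b :: "'a::{field,finite}"
  assumes q: "odd (card (UNIV :: 'a set))" and "b ^ 2 \<noteq> 1"
  shows "[[:0, 1:] ^ card (UNIV :: 'a set) + 1 = [:1, 1:] * y] (mod cheb_modulus b)
    \<longleftrightarrow> [[:of_int (leg (2 * (1 + b))):] * [:0, 1:] ^ ((card (UNIV :: 'a set) - 1) div 2) = y]
        (mod cheb_modulus b)"
    (is "[?lhs = ?v * y] (mod _) \<longleftrightarrow> [?c * ?z = y] (mod _)")
proof -
  have "[?lhs = ?v * (?c * ?z)] (mod cheb_modulus b)"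
    using x_plus_one_power_card_cong[OF q, of b] by (simp only: ac_simps)
  then have "[?lhs = ?v * y] (mod cheb_modulus b) \<longleftrightarrow> [?v * (?c * ?z) = ?v * y] (mod cheb_modulus b)"
    by (meson cong_sym cong_trans)
  also have "\<dots> \<longleftrightarrow> [?c * ?z = y] (mod cheb_modulus b)"
    using two_mult_one_plus_neq_0[OF finite_field_odd_card_two_neq_zero[OF q] assms(2)]
    by (rule cong_mult_lcancel_invertible[OF x_plus_one_invertible_cong])
  finally show ?thesis .
qed

text \<open>The square case: Frobenius fixes \<open>x\<close>, so \<open>(x + 1)\<^sup>q \<equiv> x + 1\<close>.\<close>
lemma leg_mult_x_power_half_cong_1:
  fixes b :: "'a::{field,finite}"
  assumes q: "odd (card (UNIV :: 'a set))" and "leg (b ^ 2 - 1) = 1"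
  shows "[[:of_int (leg (2 * (1 + b))):] * [:0, 1:] ^ ((card (UNIV :: 'a set) - 1) div 2) = 1]
         (mod cheb_modulus b)"
proof -
  have "b ^ 2 \<noteq> 1"
    using assms(2) by auto
  have "[:0, 1:] + 1 = [:1, 1:] * (1 :: 'a poly)"
    by (simp add: one_pCons)
  moreover have "[[:0, 1:] ^ card (UNIV :: 'a set) = [:0, 1:]] (mod cheb_modulus (b :: 'a))"
    using x_power_card_cong[OF q, of b] assms(2) by simp
  ultimately have "[[:0, 1:] ^ card (UNIV :: 'a set) + 1 = [:1, 1:] * 1] (mod cheb_modulus b)"
    by (metis cong_add cong_refl)
  then show ?thesis
    using cong_x_plus_one_power_card_iff[OF q \<open>b ^ 2 \<noteq> 1\<close>] by blast
qed

text \<open>The non-square case: Frobenius maps \<open>x\<close> to its conjugate \<open>w = 2b - x\<close>, so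
  \<open>(x + 1)\<^sup>q \<equiv> w + 1 \<equiv> (x + 1) w\<close>.\<close>
lemma leg_mult_x_power_half_Suc_cong_1:
  fixes b :: "'a::{field,finite}"
  assumes q: "odd (card (UNIV :: 'a set))" and "leg (b ^ 2 - 1) = -1"
  shows "[[:of_int (leg (2 * (1 + b))):] * [:0, 1:] ^ Suc ((card (UNIV :: 'a set) - 1) div 2) = 1]
         (mod cheb_modulus b)"
proof -
  define z w :: "'a poly" where "z = [:0, 1:]" and "w = [:2 * b, -1:]"
  define c where "c = [:of_int (leg (2 * (1 + b))) :: 'a:]"
  define k where "k = (card (UNIV :: 'a set) - 1) div 2"
  have "b ^ 2 \<noteq> 1"
    using assms(2) by auto
  have zw: "[z * w = 1] (mod cheb_modulus b)"
    unfolding z_def w_def by (rule x_mult_conj_cong)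
  have "[z ^ card (UNIV :: 'a set) = w] (mod cheb_modulus b)"
    using x_power_card_cong[OF q, of b] assms(2) by (simp add: z_def w_def)
  then have "[z ^ card (UNIV :: 'a set) + 1 = w + z * w] (mod cheb_modulus b)"
    using cong_add[OF _ cong_sym[OF zw]] by blast
  then have "[z ^ card (UNIV :: 'a set) + 1 = [:1, 1:] * w] (mod cheb_modulus b)"
    by (simp add: z_def algebra_simps)
  then have "[c * z ^ k = w] (mod cheb_modulus b)"
    using cong_x_plus_one_power_card_iff[OF q \<open>b ^ 2 \<noteq> 1\<close>] unfolding c_def z_def k_def by blast
  then have "[z * (c * z ^ k) = z * w] (mod cheb_modulus b)"
    by (rule cong_scalar_left)
  then show ?thesis
    using cong_trans[OF _ zw] unfolding c_def z_def k_def by (simp add: ac_simps)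
qed

lemma leg_mult_x_power_cong_1:
  fixes b :: "'a::{field,finite}"
  assumes q: "odd (card (UNIV :: 'a set))" and "b ^ 2 \<noteq> 1"
    and j: "int (2 * j) = int (card (UNIV :: 'a set)) - leg (b ^ 2 - 1)"
  shows "[[:of_int (leg (2 * (1 + b))):] * [:0, 1:] ^ j = 1] (mod cheb_modulus b)"
proof -
  have card_eq: "card (UNIV :: 'a set) = Suc (2 * ((card (UNIV :: 'a set) - 1) div 2))"
    using q by presburger
  from leg_nonzero_cases[of "b ^ 2 - 1"] assms(2)
  consider "leg (b ^ 2 - 1) = 1" | "leg (b ^ 2 - 1) = -1"
    by auto
  then show ?thesis
  proof cases
    case 1
    with j card_eq have "j = (card (UNIV :: 'a set) - 1) div 2"
      by linarith
    with leg_mult_x_power_half_cong_1[OF q 1] show ?thesis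
      by simp
  next
    case 2
    with j card_eq have "j = Suc ((card (UNIV :: 'a set) - 1) div 2)"
      by linarith
    with leg_mult_x_power_half_Suc_cong_1[OF q 2] show ?thesis
      by simp
  qed
qed

lemma poly_cheb_U_eq_0_finite_field:
  fixes b :: "'a::{field,finite}"
  assumes q: "odd (card (UNIV :: 'a set))" and b: "b ^ 2 \<noteq> 1"
    and j: "int (2 * j) = int (card (UNIV :: 'a set)) - leg (b ^ 2 - 1)"
  shows "poly (cheb_U (j - 1)) b = 0"
proof (rule poly_cheb_U_eq_0_if_x_power_cong_1[OF finite_field_odd_card_two_neq_zero[OF q] b])
  show "0 < j"
    using j finite_field_odd_card_ge_3[OF q] abs_leg_le_one[of "b ^ 2 - 1"] by linarith
  define c where "c = [:of_int (leg (2 * (1 + b))) :: 'a:]"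
  define z :: "'a poly" where "z = [:0, 1:]"
  have "leg (2 * (1 + b)) * leg (2 * (1 + b)) = 1"
    using two_mult_one_plus_neq_0[OF finite_field_odd_card_two_neq_zero[OF q] b]
    by (rule leg_square_eq_1)
  then have "c * c = 1"
    by (simp add: c_def one_pCons flip: of_int_mult)
  have "[(c * z ^ j) * (c * z ^ j) = 1 * 1] (mod cheb_modulus b)"
    unfolding c_def z_def by (intro cong_mult leg_mult_x_power_cong_1 assms)
  moreover have "(c * z ^ j) * (c * z ^ j) = (c * c) * (z ^ j * z ^ j)"
    by (simp only: ac_simps)
  moreover have "z ^ j * z ^ j = z ^ (2 * j)"
    by (simp only: mult_2 power_add)
  ultimately have "[z ^ (2 * j) = 1] (mod cheb_modulus b)"
    using \<open>c * c = 1\<close> by (metis mult_1)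
  then show "[[:0, 1:] ^ (2 * j) = 1] (mod cheb_modulus b)"
    by (simp only: z_def)
qed

section \<open>Root sets and factorizations\<close>

lemma Un_leg_square_minus_one_eq:
  "{b :: 'a::field. leg (b ^ 2 - 1) = 1} \<union> {b. leg (b ^ 2 - 1) = -1} = UNIV - {1, -1}"
  (is "?L = ?R")
proof (intro set_eqI)
  fix b :: 'a
  have "b \<in> ?L \<longleftrightarrow> leg (b ^ 2 - 1) \<noteq> 0"
    using leg_nonzero_cases[of "b ^ 2 - 1"] by auto
  also have "\<dots> \<longleftrightarrow> b \<in> ?R"
    by (simp add: power2_eq_1_iff)
  finally show "b \<in> ?L \<longleftrightarrow> b \<in> ?R" .
qed

lemma cheb_U_half_card_factorization:
  fixes k :: nat
  assumes q: "odd (card (UNIV :: 'a::{field,finite} set))"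
    and k: "card (UNIV :: 'a set) = Suc (2 * k)"
  defines "A \<equiv> {b :: 'a. leg (b ^ 2 - 1) = 1}" and "B \<equiv> {b :: 'a. leg (b ^ 2 - 1) = -1}"
  shows "card A = k - 1" "card B = k"
    and "(cheb_U (k - 1) :: 'a poly) = 2 ^ (k - 1) * (\<Prod>b\<in>A. [:-b, 1:])"
    and "(cheb_U k :: 'a poly) = 2 ^ k * (\<Prod>b\<in>B. [:-b, 1:])"
proof -
  have two: "(2 :: 'a) \<noteq> 0"
    by (rule finite_field_odd_card_two_neq_zero[OF q])
  have "(1 :: 'a) \<noteq> -1"
    using two by (metis add_eq_0_iff one_add_one)
  moreover have "1 \<le> k"
    using finite_field_odd_card_ge_3[OF q] k by simp
  ultimately have card_Un:
      "card (A \<union> B) = degree (cheb_U (k - 1) :: 'a poly) + degree (cheb_U k :: 'a poly)"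
    using k unfolding A_def B_def Un_leg_square_minus_one_eq
    by (simp add: degree_cheb_U[OF two] card_Diff_subset)
  have roots_A: "poly (cheb_U (k - 1)) b = 0" if "b \<in> A" for b
    using that k by (intro poly_cheb_U_eq_0_finite_field[OF q]) (auto simp: A_def)
  have roots_B: "poly (cheb_U k) b = 0" if "b \<in> B" for b
    using that k poly_cheb_U_eq_0_finite_field[OF q, of b "Suc k"]
    by (cases "b ^ 2 = 1") (auto simp: B_def)
  have "A \<inter> B = {}"
    by (auto simp: A_def B_def)
  note factorization = smult_prod_roots_if_disjoint_roots_fill_degrees[OF
      cheb_U_nonzero[OF two] cheb_U_nonzero[OF two] finite finite this card_Un roots_A roots_B]
  show "card A = k - 1" "card B = k"
    using factorization by (simp_all add: degree_cheb_U[OF two])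
  show "(cheb_U (k - 1) :: 'a poly) = 2 ^ (k - 1) * (\<Prod>b\<in>A. [:-b, 1:])"
    and "(cheb_U k :: 'a poly) = 2 ^ k * (\<Prod>b\<in>B. [:-b, 1:])"
    using factorization by (simp_all add: lead_coeff_cheb_U[OF two] smult_two_power)
qed

lemma Un_Bset_eq:
  fixes \<nu> :: int
  assumes q: "odd (card (UNIV :: 'a::{field,finite} set))" and \<nu>: "\<nu> = leg (2 :: 'a)"
  shows "Bset (1 :: 'a) (-\<nu>) (-\<nu>) \<union> Bset 1 \<nu> \<nu> = {b. leg (b ^ 2 - 1) = leg (-1 :: 'a)}"
    (is "?L = ?R")
proof (intro set_eqI)
  fix b :: 'a
  have "\<nu> = 1 \<or> \<nu> = -1"
    using leg_nonzero_cases finite_field_odd_card_two_neq_zero[OF q] \<nu> by blast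
  then have "b \<in> ?L \<longleftrightarrow> leg (1 - b) * leg (1 + b) = 1"
    using leg_nonzero_cases[of "1 - b"] leg_nonzero_cases[of "1 + b"]
    by (cases "b = 1"; cases "b = -1") (auto simp: Bset_def)
  also have "\<dots> \<longleftrightarrow> leg (-1 :: 'a) * (leg (1 - b) * leg (1 + b)) = leg (-1 :: 'a)"
    by simp
  also have "\<dots> \<longleftrightarrow> b \<in> ?R"
    by (simp add: leg_square_minus_one[OF q] mult.assoc)
  finally show "b \<in> ?L \<longleftrightarrow> b \<in> ?R" .
qed

text \<open>For \<open>b\<close> in either set \<open>(b^2 - 1 / q) = \<epsilon>\<close>, so \<open>x^(2m) \<equiv> \<nu> (1 + b / q)\<close>, which is \<open>-1\<close>
  on the first set and \<open>1\<close> on the second.\<close>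
lemma
  fixes \<nu> :: int
  assumes q: "odd (card (UNIV :: 'a::{field,finite} set))" and \<nu>: "\<nu> = leg (2 :: 'a)"
    and m: "int (4 * m) = int (card (UNIV :: 'a set)) - leg (-1 :: 'a)"
  shows poly_cheb_T_eq_0_on_Bset: "b \<in> Bset (1 :: 'a) (-\<nu>) (-\<nu>) \<Longrightarrow> poly (cheb_T m) b = 0"
    and poly_cheb_U_eq_0_on_Bset: "b \<in> Bset (1 :: 'a) \<nu> \<nu> \<Longrightarrow> poly (cheb_U (m - 1)) b = 0"
proof -
  have two: "(2 :: 'a) \<noteq> 0"
    by (rule finite_field_odd_card_two_neq_zero[OF q])
  have "(of_int \<nu> :: 'a) * of_int \<nu> = 1"
    using leg_square_eq_1[OF two] \<nu> by (metis of_int_1 of_int_mult)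
  have "0 < m"
    using m finite_field_odd_card_ge_3[OF q] abs_leg_le_one[of "-1 :: 'a"] by linarith
  have cong: "[[:of_int (\<nu> * leg (1 + b)):] * [:0, 1:] ^ (2 * m) = 1] (mod cheb_modulus b)"
    and square_ne_1: "b ^ 2 \<noteq> 1" if "b \<in> Bset 1 (-\<nu>) (-\<nu>) \<union> Bset 1 \<nu> \<nu>" for b :: 'a
  proof -
    have leg: "leg (b ^ 2 - 1) = leg (-1 :: 'a)"
      using Un_Bset_eq[OF q \<nu>] that by blast
    then show "b ^ 2 \<noteq> 1"
      by auto
    with leg m show "[[:of_int (\<nu> * leg (1 + b)):] * [:0, 1:] ^ (2 * m) = 1] (mod cheb_modulus b)"
      using leg_mult_x_power_cong_1[OF q, of b "2 * m"] leg_mult[OF q, of 2 "1 + b"]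
      by (simp add: \<nu>)
  qed
  show "poly (cheb_T m) b = 0" if "b \<in> Bset 1 (-\<nu>) (-\<nu>)"
  proof (rule poly_cheb_T_eq_0_if_x_power_cong_minus_1[OF two])
    have "[- ([:0, 1:] ^ (2 * m)) = 1] (mod cheb_modulus b)"
      using cong[of b] that \<open>of_int \<nu> * of_int \<nu> = 1\<close> by (simp add: Bset_def one_pCons)
    from cong_uminus[OF this]
    show "[[:0, 1:] ^ (2 * m) = -1] (mod cheb_modulus b)"
      by simp
  qed
  show "poly (cheb_U (m - 1)) b = 0" if "b \<in> Bset 1 \<nu> \<nu>"
    using cong[of b] square_ne_1[of b] that \<open>of_int \<nu> * of_int \<nu> = 1\<close> \<open>0 < m\<close>
    by (intro poly_cheb_U_eq_0_if_x_power_cong_1[OF two]) (simp_all add: Bset_def one_pCons)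
qed

lemma cheb_quarter_card_factorization:
  fixes m :: nat and \<nu> :: int
  assumes q: "odd (card (UNIV :: 'a::{field,finite} set))" and \<nu>: "\<nu> = leg (2 :: 'a)"
    and m: "int (4 * m) = int (card (UNIV :: 'a set)) - leg (-1 :: 'a)"
  shows "(cheb_T m :: 'a poly) = 2 ^ (m - 1) * (\<Prod>b\<in>Bset 1 (-\<nu>) (-\<nu>). [:-b, 1:])"
    and "(cheb_U (m - 1) :: 'a poly) = 2 ^ (m - 1) * (\<Prod>b\<in>Bset 1 \<nu> \<nu>. [:-b, 1:])"
proof -
  have two: "(2 :: 'a) \<noteq> 0"
    by (rule finite_field_odd_card_two_neq_zero[OF q])
  define k where "k = (card (UNIV :: 'a set) - 1) div 2"
  have k: "card (UNIV :: 'a set) = Suc (2 * k)"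
    using q unfolding k_def by presburger
  have "0 < m"
    using m finite_field_odd_card_ge_3[OF q] abs_leg_le_one[of "-1 :: 'a"] by linarith
  have "\<nu> \<noteq> 0"
    using two \<nu> by simp
  then have disjoint: "Bset (1 :: 'a) (-\<nu>) (-\<nu>) \<inter> Bset 1 \<nu> \<nu> = {}"
    by (auto simp: Bset_def)
  have "leg (-1 :: 'a) = 1 \<or> leg (-1 :: 'a) = -1"
    using leg_nonzero_cases[of "-1 :: 'a"] by simp
  then have card_Un: "card (Bset (1 :: 'a) (-\<nu>) (-\<nu>) \<union> Bset 1 \<nu> \<nu>)
      = degree (cheb_T m :: 'a poly) + degree (cheb_U (m - 1) :: 'a poly)"
    unfolding Un_Bset_eq[OF q \<nu>]
    using cheb_U_half_card_factorization(1,2)[OF q k] m k \<open>0 < m\<close>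
    by (auto simp: degree_cheb_T[OF two] degree_cheb_U[OF two])
  note factorization = smult_prod_roots_if_disjoint_roots_fill_degrees[OF
      cheb_T_nonzero[OF two] cheb_U_nonzero[OF two] finite finite disjoint card_Un
      poly_cheb_T_eq_0_on_Bset[OF q \<nu> m] poly_cheb_U_eq_0_on_Bset[OF q \<nu> m]]
  show "(cheb_T m :: 'a poly) = 2 ^ (m - 1) * (\<Prod>b\<in>Bset 1 (-\<nu>) (-\<nu>). [:-b, 1:])"
    and "(cheb_U (m - 1) :: 'a poly) = 2 ^ (m - 1) * (\<Prod>b\<in>Bset 1 \<nu> \<nu>. [:-b, 1:])"
    using factorization
    by (simp_all add: lead_coeff_cheb_T[OF two] lead_coeff_cheb_U[OF two] smult_two_power)
qed

theorem theorem9p3: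
  fixes q :: nat and \<epsilon> \<nu> :: int and m :: nat
  assumes "card (UNIV :: 'a set) = q"
    and "odd q"
    and "\<epsilon> = leg (-1 :: 'a::{field,finite})"
    and "\<nu> = leg (2 :: 'a)"
    and "int m = (int q - \<epsilon>) div 4"
  shows "(cheb_T m :: 'a poly) = 2 ^ (m - 1) * (\<Prod>b\<in>Bset (1::'a) (-\<nu>) (-\<nu>). [:-b, 1:])
       \<and> (cheb_U (m - 1) :: 'a poly) = 2 ^ (m - 1) * (\<Prod>b\<in>Bset (1::'a) \<nu> \<nu>. [:-b, 1:])
       \<and> (cheb_U ((q - 3) div 2) :: 'a poly)
            = 2 ^ ((q - 3) div 2) * (\<Prod>b\<in>{b::'a. leg (b ^ 2 - 1) = 1}. [:-b, 1:])
       \<and> (cheb_U ((q - 1) div 2) :: 'a poly)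
            = 2 ^ ((q - 1) div 2) * (\<Prod>b\<in>{b::'a. leg (b ^ 2 - 1) = -1}. [:-b, 1:])"
proof -
  have q: "odd (card (UNIV :: 'a set))"
    using assms(1,2) by simp
  have "int (4 * m) = int (card (UNIV :: 'a set)) - leg (-1 :: 'a)"
    using assms(1,3,5) four_dvd_card_minus_leg_minus_one[OF q] by auto
  note part_i = cheb_quarter_card_factorization[OF q assms(4) this]
  define k where "k = (q - 1) div 2"
  have k: "card (UNIV :: 'a set) = Suc (2 * k)"
    using assms(1,2) unfolding k_def by presburger
  then have "(q - 3) div 2 = k - 1" "(q - 1) div 2 = k"
    using assms(1) by simp_all
  with part_i cheb_U_half_card_factorization(3,4)[OF q k] show ?thesis
    by simp
qed

end
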